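(* Let $n\ge1$, $\mu>0$. Couple the type $B$ oriented swap process on $\pm[1,n]$ (finite TASEP) with the infinite colored half-space TASEP on $\pm\mathbb{N}$ by using the same clocks for all pairs of positions inside $\pm[1,n]$ (the pairs $(i,i+1)$, $1\le i\le n-1$, and $(-1,1)$). Let $\widehat h$ and $h$ be the respective height functions. Then almost surely, for all $\tau\ge0$ and all $i=0,1,\dots,n-1$, \[ \widehat h^{\ge i+1}(\tau,-i-1)=\min\big(h^{\ge i+1}(\tau,-i-1),\,n-i\big). \]
   Context: Infinite colored half-space TASEP with boundary rate $\mu$: positions $\pm\mathbb{N}$ ordered $\dots<-2<-1<1<2<\dots$; configuration $\eta:\pm\mathbb{N}\to\pm\mathbb{N}$ bijective with $\eta(-x)=-\eta(x)$, initially $\eta(x)=x$; each pair $(x,x+1)$, $x\ge1$, has a rate-$1$ clock, and $(-1,1)$ a rate-$\mu$ clock; at a ring, if $\eta(x)<\eta(x+1)$ (resp. $\eta(-1)<\eta(1)$) the two particles are swapped, and for $x\ge1$ also the particles at $-x,-x-1$; no other moves. The finite TASEP (type $B$ oriented swap process) is the same dynamics restricted to positions $\pm[1,n]$, with only the clocks on $(i,i+1)$, $1\le i\le n-1$, and $(-1,1)$. Height functions: $h^{\ge j}(\tau,x)$ (resp. $\widehat h^{\ge j}(\tau,x)$) is the number of particles of color $\ge j$ at positions $\le x$ at time $\tau$ in the infinite (resp. finite) system. *)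

theory Defs
  imports "HOL-Probability.Probability"
begin

text \<open>Positions and colours in the ordered set \<open>\<plusminus>\<nat>\<close> are represented by nonzero integers;
  the integer order restricted to nonzero integers is exactly the order
  \<open>\<dots> < -2 < -1 < 1 < 2 < \<dots>\<close>.  Configurations are functions \<open>int \<Rightarrow> int\<close>
  (the value at 0 is irrelevant).

  Bonds are indexed by naturals: bond 0 is the pair (-1,1) with rate \<open>\<mu>\<close>,
  bond b \<ge> 1 is the pair (b,b+1) (together with its mirror (-b-1,-b)) with rate 1.\<close>

definition bond_rate :: "real \<Rightarrow> nat \<Rightarrow> real" where
  "bond_rate \<mu> b = (if b = 0 then \<mu> else 1)"

text \<open>Clocks: \<open>\<omega> (b,k)\<close> is the k-th waiting time of the Poisson clock of bond b;
  all waiting times are independent exponentials with the bond's rate.\<close>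

definition clock_space :: "real \<Rightarrow> (nat \<times> nat \<Rightarrow> real) measure" where
  "clock_space \<mu> = PiM UNIV (\<lambda>bk. density lborel (exponential_density (bond_rate \<mu> (fst bk))))"

definition ring_time :: "(nat \<times> nat \<Rightarrow> real) \<Rightarrow> nat \<Rightarrow> nat \<Rightarrow> real" where
  "ring_time \<omega> b k = (\<Sum>j\<le>k. \<omega> (b, j))"

definition tswap :: "int \<Rightarrow> int \<Rightarrow> (int \<Rightarrow> int) \<Rightarrow> (int \<Rightarrow> int)" where
  "tswap a c \<eta> = (\<lambda>y. if y = a then \<eta> c else if y = c then \<eta> a else \<eta> y)"

definition bond_update :: "nat \<Rightarrow> (int \<Rightarrow> int) \<Rightarrow> (int \<Rightarrow> int)" where
  "bond_update b \<eta> =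
     (if b = 0 then (if \<eta> (-1) < \<eta> 1 then tswap (-1) 1 \<eta> else \<eta>)
      else (let x = int b in
            if \<eta> x < \<eta> (x + 1) then tswap (- x) (- x - 1) (tswap x (x + 1) \<eta>) else \<eta>))"

text \<open>Ring times of the bonds 0,...,m-1 up to time \<open>\<tau>\<close>, and the bonds ringing at a given time
  (simultaneous rings have probability zero; they are processed in increasing bond order).\<close>

definition ring_times :: "(nat \<times> nat \<Rightarrow> real) \<Rightarrow> nat \<Rightarrow> real \<Rightarrow> real set" where
  "ring_times \<omega> m \<tau> = {ring_time \<omega> b k | b k. b < m \<and> ring_time \<omega> b k \<le> \<tau>}"

definition bonds_ringing_at :: "(nat \<times> nat \<Rightarrow> real) \<Rightarrow> nat \<Rightarrow> real \<Rightarrow> nat list" where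
  "bonds_ringing_at \<omega> m t = sorted_list_of_set {b. b < m \<and> (\<exists>k. ring_time \<omega> b k = t)}"

text \<open>Finite TASEP (type B oriented swap process) on \<open>\<plusminus>[1,m]\<close>, driven by the clocks of
  bonds 0,...,m-1, started from the identity: rings are applied in chronological order.\<close>

definition finite_config :: "nat \<Rightarrow> (nat \<times> nat \<Rightarrow> real) \<Rightarrow> real \<Rightarrow> int \<Rightarrow> int" where
  "finite_config m \<omega> \<tau> =
     fold bond_update
       (concat (map (bonds_ringing_at \<omega> m) (sorted_list_of_set (ring_times \<omega> m \<tau>)))) id"

text \<open>Infinite half-space TASEP via the Harris graphical construction: if bond m \<ge> 1
  (the pair (m,m+1)) has not rung by time \<open>\<tau>\<close>, positions in \<open>\<plusminus>[1,m]\<close> evolve up to time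
  \<open>\<tau>\<close> only under the bonds 0,...,m-1.\<close>

definition infinite_config :: "(nat \<times> nat \<Rightarrow> real) \<Rightarrow> real \<Rightarrow> int \<Rightarrow> int" where
  "infinite_config \<omega> \<tau> x =
     finite_config (LEAST m. nat \<bar>x\<bar> \<le> m \<and> 1 \<le> m \<and> (\<forall>k. \<tau> < ring_time \<omega> m k)) \<omega> \<tau> x"

definition height_inf :: "(nat \<times> nat \<Rightarrow> real) \<Rightarrow> real \<Rightarrow> int \<Rightarrow> int \<Rightarrow> nat" where
  "height_inf \<omega> \<tau> j x = card {y::int. y \<noteq> 0 \<and> y \<le> x \<and> j \<le> infinite_config \<omega> \<tau> y}"

definition height_fin :: "nat \<Rightarrow> (nat \<times> nat \<Rightarrow> real) \<Rightarrow> real \<Rightarrow> int \<Rightarrow> int \<Rightarrow> nat" where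
  "height_fin n \<omega> \<tau> j x =
     card {y::int. y \<noteq> 0 \<and> - int n \<le> y \<and> y \<le> x \<and> j \<le> finite_config n \<omega> \<tau> y}"

end

theory Submission
  imports Defs
begin

text \<open>For a configuration \<open>\<eta>\<close> let \<open>count_below w t \<eta> x\<close> be the number of positions
  \<open>y \<ge> x\<close> of \<open>\<plusminus>[1,w]\<close> carrying a colour \<open>< t\<close>.  Because configurations stay
  antisymmetric, \<open>\<eta> (-y) = - \<eta> y\<close>, both height functions at \<open>-j\<close> for colours \<open>\<ge> j\<close> are such
  counts, with \<open>t = 1 - j\<close> and \<open>x = j\<close>.

  Fix \<open>\<tau>\<close> and a bond \<open>M \<ge> n\<close> that has not rung by time \<open>\<tau>\<close>; on \<open>\<plusminus>[1,M]\<close> the infinite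
  system then coincides with the finite system of size \<open>M\<close>.  A ring sorts an adjacent pair
  \<open>a < c\<close>: counts at \<open>x \<notin> (a,c]\<close> do not change, and at \<open>x \<in> (a,c]\<close> the count becomes the
  count at \<open>c + 1\<close> plus one if either colour of the pair is small.  This local rule commutes
  with taking minima, so the identity
  \<open>count\<^sub>n = min count\<^sub>M (min |window\<^sub>n| (n - i))\<close> on \<open>[-n, n+1]\<close>, which holds at time 0,
  survives every shared ring.  Rings of the bonds \<open>n, \<dots>, M - 1\<close> act on the big system only;
  they increase its counts and change them only outside \<open>(-n, n]\<close>, where the identity is
  insensitive to such increases.  Almost surely every bond rings only finitely often in bounded
  time and for every \<open>\<tau>\<close> arbitrarily distant bonds have not rung, so this applies for all \<open>\<tau>\<close>.\<close>

section \<open>Sorting adjacent pairs\<close>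

definition sort_pair :: "int \<Rightarrow> int \<Rightarrow> (int \<Rightarrow> int) \<Rightarrow> int \<Rightarrow> int" where
  "sort_pair a c \<eta> = (if \<eta> a < \<eta> c then tswap a c \<eta> else \<eta>)"

definition antisym_config :: "(int \<Rightarrow> int) \<Rightarrow> bool" where
  "antisym_config \<eta> \<longleftrightarrow> (\<forall>y. \<eta> (- y) = - \<eta> y)"

definition adjacent :: "int \<Rightarrow> int \<Rightarrow> bool" where
  "adjacent a c \<longleftrightarrow> a \<noteq> 0 \<and> c \<noteq> 0 \<and> a < c \<and> (\<forall>y. a < y \<and> y < c \<longrightarrow> y = 0)"

lemma adjacent_minus_one_one: "adjacent (-1) 1"
  by (auto simp: adjacent_def)

lemma adjacent_bond:
  assumes "1 \<le> b"
  shows "adjacent (int b) (int b + 1)" and "adjacent (- int b - 1) (- int b)"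
  using assms by (auto simp: adjacent_def)

lemma antisym_config_id: "antisym_config id"
  by (simp add: antisym_config_def)

lemma antisym_config_minus_one:
  assumes "antisym_config \<eta>"
  shows "\<eta> (- x - 1) = - \<eta> (x + 1)"
  using assms unfolding antisym_config_def by (metis minus_diff_eq diff_minus_eq_add add.commute)

lemma antisym_config_bond_update:
  assumes "antisym_config \<eta>"
  shows "antisym_config (bond_update b \<eta>)"
proof -
  have neg: "\<eta> (- y) = - \<eta> y" and neg1: "\<eta> (- y - 1) = - \<eta> (y + 1)" for y
    using assms antisym_config_minus_one unfolding antisym_config_def by auto
  have neg1': "\<eta> (- 1 - y) = - \<eta> (1 + y)" for y
    using neg1[of y] by (metis add.commute diff_conv_add_uminus)
  have "bond_update b \<eta> (- y) = - bond_update b \<eta> y" for y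
  proof (cases "b = 0")
    case True
    then show ?thesis by (auto simp: bond_update_def tswap_def neg)
  next
    case False
    define x where "x = int b"
    have "1 \<le> x" using False unfolding x_def by simp
    have update: "bond_update b \<eta> =
        (if \<eta> x < \<eta> (x + 1) then tswap (- x) (- x - 1) (tswap x (x + 1) \<eta>) else \<eta>)"
      using False unfolding bond_update_def x_def Let_def by simp
    show ?thesis
      unfolding update tswap_def using \<open>1 \<le> x\<close>
      by (cases "y = x"; cases "y = x + 1"; cases "y = - x"; cases "y = - x - 1") (simp_all add: neg neg1 neg1' add.commute)
  qed
  then show ?thesis unfolding antisym_config_def by blast
qed

lemma antisym_config_fold_bond_update:
  "antisym_config \<eta> \<Longrightarrow> antisym_config (fold bond_update L \<eta>)"
  by (induction L arbitrary: \<eta>) (auto intro: antisym_config_bond_update)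

lemma bond_update_zero: "bond_update 0 \<eta> = sort_pair (-1) 1 \<eta>"
  by (simp add: bond_update_def sort_pair_def)

lemma bond_update_eq_sort_pairs:
  assumes "antisym_config \<eta>" and "1 \<le> b"
  shows "bond_update b \<eta> = sort_pair (- int b - 1) (- int b) (sort_pair (int b) (int b + 1) \<eta>)"
proof -
  have "\<eta> (- int b - 1) = - \<eta> (int b + 1)" "\<eta> (- int b) = - \<eta> (int b)"
    using assms(1) antisym_config_minus_one unfolding antisym_config_def by auto
  then show ?thesis
    using assms(2) unfolding bond_update_def sort_pair_def tswap_def Let_def by (auto simp: fun_eq_iff)
qed

section \<open>Counting small colours in a window\<close>

definition window :: "nat \<Rightarrow> int \<Rightarrow> int set" where
  "window w x = {y. - int w \<le> y \<and> y \<le> int w \<and> y \<noteq> 0 \<and> x \<le> y}"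

definition count_below :: "nat \<Rightarrow> int \<Rightarrow> (int \<Rightarrow> int) \<Rightarrow> int \<Rightarrow> nat" where
  "count_below w t \<eta> x = (\<Sum>y\<in>window w x. of_bool (\<eta> y < t))"

lemma finite_window [simp]: "finite (window w x)"
  unfolding window_def by (rule finite_subset[of _ "{- int w..int w}"]) auto

lemma count_below_eq_card: "count_below w t \<eta> x = card {y \<in> window w x. \<eta> y < t}"
  by (simp add: count_below_def Int_def)

lemma count_below_le_card_window: "count_below w t \<eta> x \<le> card (window w x)"
  unfolding count_below_eq_card by (rule card_mono) auto

lemma count_below_id:
  assumes "- int w \<le> x" and "t \<le> 0"
  shows "count_below w t id x = nat (t - x)"
proof -
  have "{y \<in> window w x. id y < t} = {x..<t}"
    using assms by (auto simp: window_def)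
  then show ?thesis unfolding count_below_eq_card by simp
qed

lemma card_window:
  assumes "1 \<le> j"
  shows "card (window w j) = nat (int w - j + 1)"
proof -
  have "window w j = {j..int w}"
    using assms by (auto simp: window_def)
  then show ?thesis by simp
qed

lemma window_split:
  assumes "adjacent a c" and "- int w \<le> a" and "c \<le> int w"
  shows "a < x \<Longrightarrow> x \<le> c \<Longrightarrow> window w x = insert c (window w (c + 1))"
    and "window w a = insert a (insert c (window w (c + 1)))"
    and "x \<le> a \<Longrightarrow> window w x = insert a (insert c (window w x - {a, c}))"
    and "a \<notin> window w (c + 1)" and "c \<notin> window w (c + 1)"
  using assms unfolding adjacent_def window_def by (auto; fastforce)+

lemma count_below_split:
  assumes "adjacent a c" and "- int w \<le> a" and "c \<le> int w"
  shows "a < x \<Longrightarrow> x \<le> c \<Longrightarrow> count_below w t \<eta> x = count_below w t \<eta> (c + 1) + of_bool (\<eta> c < t)"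
    and "count_below w t \<eta> a
           = count_below w t \<eta> (c + 1) + of_bool (\<eta> c < t) + of_bool (\<eta> a < t)"
  using window_split(1,2,4,5)[OF assms] assms(1) unfolding count_below_def adjacent_def by simp_all

lemma card_window_split:
  assumes "adjacent a c" and "- int w \<le> a" and "c \<le> int w"
  shows "a < x \<Longrightarrow> x \<le> c \<Longrightarrow> card (window w x) = card (window w (c + 1)) + 1"
    and "card (window w a) = card (window w (c + 1)) + 2"
  using window_split(1,2,4,5)[OF assms] assms(1) unfolding adjacent_def by simp_all

text \<open>After sorting, position \<open>c\<close> carries the smaller of the two colours.\<close>

lemma count_below_sort_pair:
  assumes "adjacent a c" and "- int w \<le> a" and "c \<le> int w"
  shows "x \<le> a \<or> c < x \<Longrightarrow> count_below w t (sort_pair a c \<eta>) x = count_below w t \<eta> x"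
    and "a < x \<Longrightarrow> x \<le> c \<Longrightarrow> count_below w t (sort_pair a c \<eta>) x
           = count_below w t \<eta> (c + 1) + of_bool (\<eta> a < t \<or> \<eta> c < t)"
proof -
  have ac: "a < c" using assms(1) by (simp add: adjacent_def)
  have same: "sort_pair a c \<eta> y = \<eta> y" if "y \<noteq> a" "y \<noteq> c" for y
    using that by (simp add: sort_pair_def tswap_def)
  have pair: "of_bool (sort_pair a c \<eta> a < t) + of_bool (sort_pair a c \<eta> c < t)
      = (of_bool (\<eta> a < t) + of_bool (\<eta> c < t) :: nat)"
    using ac by (simp add: sort_pair_def tswap_def)
  have after: "count_below w t (sort_pair a c \<eta>) (c + 1) = count_below w t \<eta> (c + 1)"
    unfolding count_below_def by (rule sum.cong) (use same ac in \<open>auto simp: window_def\<close>)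
  show "count_below w t (sort_pair a c \<eta>) x = count_below w t \<eta> x" if "x \<le> a \<or> c < x"
    using that
  proof (elim disjE)
    assume "c < x"
    then show ?thesis
      unfolding count_below_def by (intro sum.cong) (use same ac in \<open>auto simp: window_def\<close>)
  next
    assume "x \<le> a"
    have split: "count_below w t \<eta>' x = of_bool (\<eta>' a < t) + of_bool (\<eta>' c < t)
        + (\<Sum>y\<in>window w x - {a, c}. of_bool (\<eta>' y < t))" for \<eta>'
      unfolding count_below_def
      by (subst window_split(3)[OF assms \<open>x \<le> a\<close>]) (use ac in \<open>simp del: sum_of_bool_eq\<close>)
    have rest: "(\<Sum>y\<in>window w x - {a, c}. of_bool (sort_pair a c \<eta> y < t))
        = (\<Sum>y\<in>window w x - {a, c}. of_bool (\<eta> y < t) :: nat)"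
      by (rule sum.cong) (use same in auto)
    show ?thesis
      unfolding split[of "sort_pair a c \<eta>"] split[of \<eta>] rest pair ..
  qed
  show "count_below w t (sort_pair a c \<eta>) x
      = count_below w t \<eta> (c + 1) + of_bool (\<eta> a < t \<or> \<eta> c < t)" if "a < x" "x \<le> c"
    using count_below_split(1)[OF assms that, of t "sort_pair a c \<eta>"] after ac
    by (auto simp: sort_pair_def tswap_def)
qed

lemma count_below_sort_pair_mono:
  assumes "adjacent a c" and "- int w \<le> a" and "c \<le> int w"
  shows "count_below w t \<eta> x \<le> count_below w t (sort_pair a c \<eta>) x"
proof (cases "a < x \<and> x \<le> c")
  case True
  then show ?thesis
    using count_below_sort_pair(2)[OF assms, of x t \<eta>] count_below_split(1)[OF assms, of x t \<eta>]
    by auto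
next
  case False
  then show ?thesis using count_below_sort_pair(1)[OF assms, of x t \<eta>] by auto
qed

lemma count_below_bond_update_mono:
  assumes "antisym_config \<eta>" and "1 \<le> b" and "int b + 1 \<le> int M"
  shows "count_below M t \<eta> x \<le> count_below M t (bond_update b \<eta>) x"
    and "x \<noteq> int b + 1 \<Longrightarrow> x \<noteq> - int b \<Longrightarrow> count_below M t (bond_update b \<eta>) x = count_below M t \<eta> x"
proof -
  have right: "- int M \<le> int b" "int b + 1 \<le> int M"
    and left: "- int M \<le> - int b - 1" "- int b \<le> int M"
    using assms(2,3) by auto
  note sort_right = adjacent_bond(1)[OF assms(2)] right
    and sort_left = adjacent_bond(2)[OF assms(2)] left
  note update = bond_update_eq_sort_pairs[OF assms(1,2)]
  show "count_below M t \<eta> x \<le> count_below M t (bond_update b \<eta>) x"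
    unfolding update
    using count_below_sort_pair_mono[OF sort_right, of t \<eta> x]
      count_below_sort_pair_mono[OF sort_left, of t "sort_pair (int b) (int b + 1) \<eta>" x]
    by linarith
  assume "x \<noteq> int b + 1" "x \<noteq> - int b"
  then have "x \<le> int b \<or> int b + 1 < x" and "x \<le> - int b - 1 \<or> - int b < x"
    by auto
  then show "count_below M t (bond_update b \<eta>) x = count_below M t \<eta> x"
    unfolding update by (simp add: count_below_sort_pair(1)[OF sort_left] count_below_sort_pair(1)[OF sort_right])
qed

lemma card_height_eq_count_below:
  assumes "antisym_config \<eta>" and "1 \<le> j"
  shows "card {y. y \<noteq> 0 \<and> - int w \<le> y \<and> y \<le> - j \<and> j \<le> \<eta> y} = count_below w (1 - j) \<eta> j"
proof -
  have neg: "\<eta> (- y) = - \<eta> y" for y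
    using assms(1) unfolding antisym_config_def by auto
  have "{y. y \<noteq> 0 \<and> - int w \<le> y \<and> y \<le> - j \<and> j \<le> \<eta> y} = uminus ` {y \<in> window w j. \<eta> y < 1 - j}"
  proof (intro set_eqI iffI)
    fix y
    assume "y \<in> {y. y \<noteq> 0 \<and> - int w \<le> y \<and> y \<le> - j \<and> j \<le> \<eta> y}"
    then have "- y \<in> {y \<in> window w j. \<eta> y < 1 - j}"
      using neg[of y] assms(2) by (auto simp: window_def)
    then show "y \<in> uminus ` {y \<in> window w j. \<eta> y < 1 - j}"
      by (metis image_eqI minus_minus)
  next
    fix y
    assume "y \<in> uminus ` {y \<in> window w j. \<eta> y < 1 - j}"
    then show "y \<in> {y. y \<noteq> 0 \<and> - int w \<le> y \<and> y \<le> - j \<and> j \<le> \<eta> y}"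
      using neg assms(2) by (auto simp: window_def)
  qed
  then show ?thesis unfolding count_below_eq_card by (simp add: card_image)
qed

section \<open>The coupling invariant\<close>

definition capped_coupling ::
    "nat \<Rightarrow> nat \<Rightarrow> int \<Rightarrow> nat \<Rightarrow> (int \<Rightarrow> int) \<Rightarrow> (int \<Rightarrow> int) \<Rightarrow> bool" where
  "capped_coupling n M t Z \<eta>\<^sub>n \<eta>\<^sub>M \<longleftrightarrow> count_below n t \<eta>\<^sub>n (- int n) = Z \<and>
     (\<forall>x. - int n \<le> x \<and> x \<le> int n + 1 \<longrightarrow>
        count_below n t \<eta>\<^sub>n x = min (count_below M t \<eta>\<^sub>M x) (min (card (window n x)) Z))"

lemma min_of_bool_merge:
  fixes s s' k Z :: nat
  assumes "s + of_bool C + of_bool A = min (s' + of_bool C' + of_bool A') (min (k + 2) Z)"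
    and "s = min s' (min k Z)"
  shows "s + of_bool (A \<or> C) = min (s' + of_bool (A' \<or> C')) (min (k + 1) Z)"
  using assms by (cases A; cases C; cases A'; cases C') (simp_all add: min_def split: if_splits)

lemma capped_coupling_id:
  assumes "t \<le> 0" and "n \<le> M"
  shows "capped_coupling n M t (nat (t + int n)) id id"
  unfolding capped_coupling_def
proof (intro conjI allI impI)
  show "count_below n t id (- int n) = nat (t + int n)"
    using count_below_id[of n "- int n" t] assms(1) by simp
  fix x
  assume x: "- int n \<le> x \<and> x \<le> int n + 1"
  have small: "count_below n t id x = nat (t - x)"
    using count_below_id[of n x t] x assms(1) by simp
  have big: "count_below M t id x = nat (t - x)"
    using count_below_id[of M x t] x assms by simp
  have "nat (t - x) \<le> card (window n x)"
    using count_below_le_card_window[of n t id x] small by simp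
  moreover have "nat (t - x) \<le> nat (t + int n)"
    using x by (intro nat_mono) linarith
  ultimately show "count_below n t id x = min (count_below M t id x) (min (card (window n x)) (nat (t + int n)))"
    unfolding small big by simp
qed

lemma capped_coupling_sort_pair:
  assumes coupled: "capped_coupling n M t Z \<eta>\<^sub>n \<eta>\<^sub>M"
    and pair: "adjacent a c" "- int n \<le> a" "c \<le> int n" and "n \<le> M"
  shows "capped_coupling n M t Z (sort_pair a c \<eta>\<^sub>n) (sort_pair a c \<eta>\<^sub>M)"
proof -
  have pair_M: "adjacent a c" "- int M \<le> a" "c \<le> int M"
    using pair \<open>n \<le> M\<close> by auto
  have ac: "a < c"
    using pair(1) by (simp add: adjacent_def)
  have at_a: "count_below n t \<eta>\<^sub>n a = min (count_below M t \<eta>\<^sub>M a) (min (card (window n a)) Z)"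
    and after_c: "count_below n t \<eta>\<^sub>n (c + 1)
                    = min (count_below M t \<eta>\<^sub>M (c + 1)) (min (card (window n (c + 1))) Z)"
    and left_end: "count_below n t \<eta>\<^sub>n (- int n) = Z"
    using coupled pair ac unfolding capped_coupling_def by auto
  show ?thesis
    unfolding capped_coupling_def
  proof (intro conjI allI impI)
    show "count_below n t (sort_pair a c \<eta>\<^sub>n) (- int n) = Z"
      using count_below_sort_pair(1)[OF pair, of "- int n"] pair(2) left_end by simp
    fix x
    assume x: "- int n \<le> x \<and> x \<le> int n + 1"
    show "count_below n t (sort_pair a c \<eta>\<^sub>n) x
        = min (count_below M t (sort_pair a c \<eta>\<^sub>M) x) (min (card (window n x)) Z)"
    proof (cases "a < x \<and> x \<le> c")
      case False
      then have "x \<le> a \<or> c < x" by linarith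
      then show ?thesis
        using coupled x count_below_sort_pair(1)[OF pair] count_below_sort_pair(1)[OF pair_M]
        unfolding capped_coupling_def by simp
    next
      case True
      have merged: "count_below n t \<eta>\<^sub>n (c + 1) + of_bool (\<eta>\<^sub>n c < t) + of_bool (\<eta>\<^sub>n a < t)
          = min (count_below M t \<eta>\<^sub>M (c + 1) + of_bool (\<eta>\<^sub>M c < t) + of_bool (\<eta>\<^sub>M a < t))
                (min (card (window n (c + 1)) + 2) Z)"
        using at_a count_below_split(2)[OF pair] count_below_split(2)[OF pair_M]
          card_window_split(2)[OF pair] by simp
      show ?thesis
        using True count_below_sort_pair(2)[OF pair] count_below_sort_pair(2)[OF pair_M]
          card_window_split(1)[OF pair] min_of_bool_merge[OF merged after_c]
        by simp
    qed
  qed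
qed

lemma capped_coupling_increase_big:
  assumes coupled: "capped_coupling n M t Z \<eta>\<^sub>n \<eta>\<^sub>M"
    and increase: "\<And>x. count_below M t \<eta>\<^sub>M x \<le> count_below M t \<eta>\<^sub>M' x"
    and inside: "\<And>x. - int n < x \<Longrightarrow> x \<le> int n \<Longrightarrow> count_below M t \<eta>\<^sub>M' x = count_below M t \<eta>\<^sub>M x"
  shows "capped_coupling n M t Z \<eta>\<^sub>n \<eta>\<^sub>M'"
  unfolding capped_coupling_def
proof (intro conjI allI impI)
  show left_end: "count_below n t \<eta>\<^sub>n (- int n) = Z"
    using coupled unfolding capped_coupling_def by auto
  fix x
  assume x: "- int n \<le> x \<and> x \<le> int n + 1"
  have old: "count_below n t \<eta>\<^sub>n x = min (count_below M t \<eta>\<^sub>M x) (min (card (window n x)) Z)"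
    using coupled x unfolding capped_coupling_def by auto
  consider "x = - int n" | "x = int n + 1" | "- int n < x \<and> x \<le> int n"
    using x by linarith
  then show "count_below n t \<eta>\<^sub>n x = min (count_below M t \<eta>\<^sub>M' x) (min (card (window n x)) Z)"
  proof cases
    case 1
    then show ?thesis using old left_end increase[of x] by auto
  next
    case 2
    then have "window n x = {}" by (auto simp: window_def)
    then show ?thesis by (simp add: count_below_def)
  next
    case 3
    then show ?thesis using old inside[of x] by auto
  qed
qed

lemma capped_coupling_bond_update:
  assumes coupled: "capped_coupling n M t Z \<eta>\<^sub>n \<eta>\<^sub>M"
    and antisym: "antisym_config \<eta>\<^sub>n" "antisym_config \<eta>\<^sub>M"
    and "b < M" and "n \<le> M" and "1 \<le> n"
  shows "capped_coupling n M t Z (if b < n then bond_update b \<eta>\<^sub>n else \<eta>\<^sub>n) (bond_update b \<eta>\<^sub>M)"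
proof (cases "b < n")
  case small: True
  show ?thesis
  proof (cases "b = 0")
    case True
    then show ?thesis
      using capped_coupling_sort_pair[OF coupled adjacent_minus_one_one] small \<open>n \<le> M\<close>
      by (simp add: bond_update_zero)
  next
    case False
    then have "1 \<le> b" by simp
    have "capped_coupling n M t Z (sort_pair (int b) (int b + 1) \<eta>\<^sub>n) (sort_pair (int b) (int b + 1) \<eta>\<^sub>M)"
      using capped_coupling_sort_pair[OF coupled adjacent_bond(1)[OF \<open>1 \<le> b\<close>]] small \<open>n \<le> M\<close>
      by simp
    from capped_coupling_sort_pair[OF this adjacent_bond(2)[OF \<open>1 \<le> b\<close>]]
    show ?thesis
      using small \<open>n \<le> M\<close> bond_update_eq_sort_pairs[OF _ \<open>1 \<le> b\<close>] antisym by simp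
  qed
next
  case False
  have "1 \<le> b" "int b + 1 \<le> int M"
    using False \<open>b < M\<close> \<open>1 \<le> n\<close> by auto
  note bond_mono = count_below_bond_update_mono[OF antisym(2) this]
  have "capped_coupling n M t Z \<eta>\<^sub>n (bond_update b \<eta>\<^sub>M)"
  proof (rule capped_coupling_increase_big[OF coupled bond_mono(1)])
    fix x
    assume "- int n < x" "x \<le> int n"
    then show "count_below M t (bond_update b \<eta>\<^sub>M) x = count_below M t \<eta>\<^sub>M x"
      using False by (intro bond_mono(2)) auto
  qed
  then show ?thesis using False by simp
qed

lemma capped_coupling_fold_bond_update:
  assumes "capped_coupling n M t Z \<eta>\<^sub>n \<eta>\<^sub>M" "antisym_config \<eta>\<^sub>n" "antisym_config \<eta>\<^sub>M"
    and "\<forall>b\<in>set L. b < M" and "n \<le> M" and "1 \<le> n"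
  shows "capped_coupling n M t Z (fold bond_update (filter (\<lambda>b. b < n) L) \<eta>\<^sub>n) (fold bond_update L \<eta>\<^sub>M)"
  using assms
proof (induction L arbitrary: \<eta>\<^sub>n \<eta>\<^sub>M)
  case Nil
  then show ?case by simp
next
  case (Cons b L)
  have step: "capped_coupling n M t Z (if b < n then bond_update b \<eta>\<^sub>n else \<eta>\<^sub>n) (bond_update b \<eta>\<^sub>M)"
    using Cons.prems by (intro capped_coupling_bond_update) auto
  have "antisym_config (if b < n then bond_update b \<eta>\<^sub>n else \<eta>\<^sub>n)" "antisym_config (bond_update b \<eta>\<^sub>M)"
    using Cons.prems antisym_config_bond_update by simp_all
  from Cons.IH[OF step this] Cons.prems show ?case
    by (cases "b < n") simp_all
qed

section \<open>Localising the infinite system\<close>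

definition ring_sequence :: "(nat \<times> nat \<Rightarrow> real) \<Rightarrow> real \<Rightarrow> nat \<Rightarrow> nat list" where
  "ring_sequence \<omega> \<tau> m =
     concat (map (bonds_ringing_at \<omega> m) (sorted_list_of_set (ring_times \<omega> m \<tau>)))"

definition silent :: "(nat \<times> nat \<Rightarrow> real) \<Rightarrow> real \<Rightarrow> nat \<Rightarrow> bool" where
  "silent \<omega> \<tau> m \<longleftrightarrow> (\<forall>k. \<tau> < ring_time \<omega> m k)"

lemma finite_config_eq_fold: "finite_config m \<omega> \<tau> = fold bond_update (ring_sequence \<omega> \<tau> m) id"
  by (simp add: finite_config_def ring_sequence_def)

lemma antisym_config_finite_config: "antisym_config (finite_config m \<omega> \<tau>)"
  unfolding finite_config_eq_fold by (intro antisym_config_fold_bond_update antisym_config_id)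

lemma set_sorted_list_of_set_subset: "set (sorted_list_of_set A) \<subseteq> A"
  by (cases "finite A") auto

lemma filter_sorted_list_of_set:
  assumes "finite A"
  shows "filter P (sorted_list_of_set A) = sorted_list_of_set {x \<in> A. P x}"
proof (rule strict_sorted_equal)
  show "sorted_wrt (<) (filter P (sorted_list_of_set A))"
    using sorted_wrt_filter strict_sorted_list_of_set by blast
qed (use assms in auto)

lemma concat_map_filter:
  assumes "\<And>x. x \<in> set xs \<Longrightarrow> \<not> Q x \<Longrightarrow> g x = []"
  shows "concat (map g xs) = concat (map g (filter Q xs))"
  using assms by (induction xs) auto

lemma finite_bonds_below: "finite {b. b < (m::nat) \<and> P b}"
  by (rule finite_subset[of _ "{..<m}"]) auto

lemma set_ring_sequence:
  assumes "b \<in> set (ring_sequence \<omega> \<tau> m)"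
  shows "b < m \<and> (\<exists>k. ring_time \<omega> b k \<le> \<tau>)"
proof -
  obtain t where t: "t \<in> set (sorted_list_of_set (ring_times \<omega> m \<tau>))"
    and b: "b \<in> set (bonds_ringing_at \<omega> m t)"
    using assms unfolding ring_sequence_def by auto
  have "t \<le> \<tau>"
    using t set_sorted_list_of_set_subset unfolding ring_times_def by blast
  moreover have "b < m \<and> (\<exists>k. ring_time \<omega> b k = t)"
    using b finite_bonds_below unfolding bonds_ringing_at_def by auto
  ultimately show ?thesis by auto
qed

lemma silent_not_in_ring_sequence: "silent \<omega> \<tau> m \<Longrightarrow> m \<notin> set (ring_sequence \<omega> \<tau> m')"
  using set_ring_sequence unfolding silent_def by (metis not_le)

lemma filter_ring_sequence:
  assumes finite: "finite (ring_times \<omega> m' \<tau>)" and "m \<le> m'"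
  shows "filter (\<lambda>b. b < m) (ring_sequence \<omega> \<tau> m') = ring_sequence \<omega> \<tau> m"
proof -
  let ?A' = "ring_times \<omega> m' \<tau>" and ?A = "ring_times \<omega> m \<tau>"
  have subset: "?A \<subseteq> ?A'"
    using \<open>m \<le> m'\<close> unfolding ring_times_def by (force intro: less_le_trans)
  have bonds: "filter (\<lambda>b. b < m) (bonds_ringing_at \<omega> m' t) = bonds_ringing_at \<omega> m t" for t
    unfolding bonds_ringing_at_def using \<open>m \<le> m'\<close>
    by (subst filter_sorted_list_of_set[OF finite_bonds_below])
      (auto intro!: arg_cong[where f = sorted_list_of_set])
  have "filter (\<lambda>b. b < m) (ring_sequence \<omega> \<tau> m')
      = concat (map (bonds_ringing_at \<omega> m) (sorted_list_of_set ?A'))"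
    unfolding ring_sequence_def filter_concat map_map comp_def bonds ..
  also have "\<dots> = concat (map (bonds_ringing_at \<omega> m) (filter (\<lambda>t. t \<in> ?A) (sorted_list_of_set ?A')))"
  proof (rule concat_map_filter)
    fix t
    assume "t \<in> set (sorted_list_of_set ?A')" "t \<notin> ?A"
    moreover from this(1) have "t \<le> \<tau>"
      using set_sorted_list_of_set_subset unfolding ring_times_def by blast
    ultimately have "{b. b < m \<and> (\<exists>k. ring_time \<omega> b k = t)} = {}"
      unfolding ring_times_def by auto
    then show "bonds_ringing_at \<omega> m t = []"
      unfolding bonds_ringing_at_def by simp
  qed
  also have "filter (\<lambda>t. t \<in> ?A) (sorted_list_of_set ?A') = sorted_list_of_set ?A"
    using filter_sorted_list_of_set[OF finite, of "\<lambda>t. t \<in> ?A"] subset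
    by (simp add: Int_absorb1 Collect_mem_eq Int_def[symmetric])
  finally show ?thesis unfolding ring_sequence_def .
qed

definition agree_within :: "nat \<Rightarrow> (int \<Rightarrow> int) \<Rightarrow> (int \<Rightarrow> int) \<Rightarrow> bool" where
  "agree_within m \<eta> \<eta>' \<longleftrightarrow> (\<forall>x. 1 \<le> \<bar>x\<bar> \<and> \<bar>x\<bar> \<le> int m \<longrightarrow> \<eta> x = \<eta>' x)"

lemma agree_within_bond_update_inner:
  assumes "agree_within m \<eta> \<eta>'" and "b < m"
  shows "agree_within m (bond_update b \<eta>) (bond_update b \<eta>')"
proof -
  have eq: "\<eta> x = \<eta>' x" if "1 \<le> \<bar>x\<bar>" "\<bar>x\<bar> \<le> int m" for x
    using assms(1) that unfolding agree_within_def by auto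
  show ?thesis
  proof (cases "b = 0")
    case True
    then show ?thesis
      using eq[of "-1"] eq[of 1] eq assms(2)
      unfolding agree_within_def bond_update_def tswap_def by auto
  next
    case False
    then show ?thesis
      using eq[of "int b"] eq[of "int b + 1"] eq[of "- int b"] eq[of "- int b - 1"] eq assms(2)
      unfolding agree_within_def bond_update_def tswap_def Let_def by auto
  qed
qed

lemma agree_within_bond_update_outer:
  "agree_within m \<eta> \<eta>' \<Longrightarrow> m < b \<Longrightarrow> agree_within m (bond_update b \<eta>) \<eta>'"
  unfolding agree_within_def bond_update_def tswap_def Let_def by auto

lemma agree_within_fold_bond_update:
  assumes "m \<notin> set L" and "agree_within m \<eta> \<eta>'"
  shows "agree_within m (fold bond_update L \<eta>) (fold bond_update (filter (\<lambda>b. b < m) L) \<eta>')"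
  using assms
proof (induction L arbitrary: \<eta> \<eta>')
  case Nil
  then show ?case by simp
next
  case (Cons b L)
  show ?case
  proof (cases "b < m")
    case True
    then show ?thesis
      using Cons.IH[of "bond_update b \<eta>" "bond_update b \<eta>'"] Cons.prems
        agree_within_bond_update_inner by simp
  next
    case False
    then have "m < b" using Cons.prems(1) by auto
    then show ?thesis
      using Cons.IH[of "bond_update b \<eta>" \<eta>'] Cons.prems agree_within_bond_update_outer False by simp
  qed
qed

definition maps_beyond :: "nat \<Rightarrow> (int \<Rightarrow> int) \<Rightarrow> bool" where
  "maps_beyond m \<eta> \<longleftrightarrow> (\<forall>x. int m < x \<longrightarrow> int m < \<eta> x) \<and> (\<forall>x. x < - int m \<longrightarrow> \<eta> x < - int m)"

lemma maps_beyond_fold_bond_update: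
  "m \<notin> set L \<Longrightarrow> maps_beyond m \<eta> \<Longrightarrow> maps_beyond m (fold bond_update L \<eta>)"
proof (induction L arbitrary: \<eta>)
  case (Cons b L)
  then have "b < m \<or> m < b" by auto
  then have "maps_beyond m (bond_update b \<eta>)"
    using Cons.prems(2) unfolding maps_beyond_def bond_update_def tswap_def Let_def by auto
  then show ?case using Cons by simp
qed simp

lemma infinite_config_eq_finite_config:
  assumes finite: "\<forall>m. finite (ring_times \<omega> m \<tau>)" and "silent \<omega> \<tau> M"
    and y: "1 \<le> \<bar>y\<bar>" "\<bar>y\<bar> \<le> int M"
  shows "infinite_config \<omega> \<tau> y = finite_config M \<omega> \<tau> y"
proof -
  define m where "m = (LEAST m. nat \<bar>y\<bar> \<le> m \<and> 1 \<le> m \<and> silent \<omega> \<tau> m)"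
  have M: "nat \<bar>y\<bar> \<le> M \<and> 1 \<le> M \<and> silent \<omega> \<tau> M"
    using y \<open>silent \<omega> \<tau> M\<close> by auto
  have m: "nat \<bar>y\<bar> \<le> m \<and> 1 \<le> m \<and> silent \<omega> \<tau> m"
    unfolding m_def by (rule LeastI) (rule M)
  have "m \<le> M"
    unfolding m_def by (rule Least_le) (rule M)
  have "agree_within m (finite_config M \<omega> \<tau>) (finite_config m \<omega> \<tau>)"
    using agree_within_fold_bond_update[OF silent_not_in_ring_sequence] m
    unfolding finite_config_eq_fold filter_ring_sequence[OF finite[rule_format] \<open>m \<le> M\<close>, symmetric]
    by (simp add: agree_within_def)
  then have "finite_config M \<omega> \<tau> y = finite_config m \<omega> \<tau> y"
    using y m unfolding agree_within_def by auto
  then show ?thesis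
    unfolding infinite_config_def m_def silent_def by simp
qed

lemma infinite_config_beyond:
  assumes "\<forall>N. \<exists>m\<ge>N. silent \<omega> \<tau> m" and "silent \<omega> \<tau> M" and "y < - int M"
  shows "infinite_config \<omega> \<tau> y < - int M"
proof -
  define m where "m = (LEAST m. nat \<bar>y\<bar> \<le> m \<and> 1 \<le> m \<and> silent \<omega> \<tau> m)"
  have "\<exists>m. nat \<bar>y\<bar> \<le> m \<and> 1 \<le> m \<and> silent \<omega> \<tau> m"
    using assms(1) by (metis max.bounded_iff)
  then have m: "silent \<omega> \<tau> m"
    unfolding m_def by (rule LeastI2_ex) auto
  have "maps_beyond M (finite_config m \<omega> \<tau>)"
    unfolding finite_config_eq_fold
    by (intro maps_beyond_fold_bond_update silent_not_in_ring_sequence assms(2))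
      (auto simp: maps_beyond_def)
  then have "finite_config m \<omega> \<tau> y < - int M"
    using assms(3) unfolding maps_beyond_def by auto
  then show ?thesis
    unfolding infinite_config_def m_def silent_def by simp
qed

lemma height_inf_eq_count_below:
  assumes finite: "\<forall>m. finite (ring_times \<omega> m \<tau>)" and silent: "\<forall>N. \<exists>m\<ge>N. silent \<omega> \<tau> m"
    and "silent \<omega> \<tau> M" and "1 \<le> j"
  shows "height_inf \<omega> \<tau> j (- j) = count_below M (1 - j) (finite_config M \<omega> \<tau>) j"
proof -
  have "(y \<noteq> 0 \<and> y \<le> - j \<and> j \<le> infinite_config \<omega> \<tau> y)
      \<longleftrightarrow> (y \<noteq> 0 \<and> - int M \<le> y \<and> y \<le> - j \<and> j \<le> finite_config M \<omega> \<tau> y)" for y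
  proof (cases "- int M \<le> y")
    case True
    then show ?thesis
      using infinite_config_eq_finite_config[OF finite \<open>silent \<omega> \<tau> M\<close>, of y] \<open>1 \<le> j\<close> by auto
  next
    case False
    then show ?thesis
      using infinite_config_beyond[OF silent \<open>silent \<omega> \<tau> M\<close>, of y] \<open>1 \<le> j\<close> by auto
  qed
  then show ?thesis
    unfolding height_inf_def
    using card_height_eq_count_below[OF antisym_config_finite_config \<open>1 \<le> j\<close>, of M] by simp
qed

lemma height_fin_eq_count_below:
  "1 \<le> j \<Longrightarrow> height_fin n \<omega> \<tau> j (- j) = count_below n (1 - j) (finite_config n \<omega> \<tau>) j"
  unfolding height_fin_def by (rule card_height_eq_count_below[OF antisym_config_finite_config])

theorem height_fin_eq_min_height_inf:
  assumes finite: "\<forall>m. finite (ring_times \<omega> m \<tau>)" and silent: "\<forall>N. \<exists>m\<ge>N. silent \<omega> \<tau> m"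
    and "i < n"
  shows "height_fin n \<omega> \<tau> (int i + 1) (- int i - 1)
           = min (height_inf \<omega> \<tau> (int i + 1) (- int i - 1)) (n - i)"
proof -
  obtain M where "n \<le> M" "silent \<omega> \<tau> M"
    using silent by blast
  define j where "j = int i + 1"
  have j: "1 \<le> j" "j \<le> int n" "1 - j = - int i" "nat (1 - j + int n) = n - i"
    using \<open>i < n\<close> unfolding j_def by auto
  have "finite_config n \<omega> \<tau> = fold bond_update (filter (\<lambda>b. b < n) (ring_sequence \<omega> \<tau> M)) id"
    by (simp add: finite_config_eq_fold filter_ring_sequence[OF finite[rule_format] \<open>n \<le> M\<close>])
  then have "capped_coupling n M (1 - j) (n - i) (finite_config n \<omega> \<tau>) (finite_config M \<omega> \<tau>)"
    using capped_coupling_fold_bond_update[OF capped_coupling_id antisym_config_id antisym_config_id,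
        of "1 - j" n M "ring_sequence \<omega> \<tau> M"] \<open>n \<le> M\<close> j set_ring_sequence
    by (simp add: finite_config_eq_fold)
  moreover have "card (window n j) = n - i"
    using card_window[OF j(1), of n] j by simp
  ultimately have "count_below n (1 - j) (finite_config n \<omega> \<tau>) j
      = min (count_below M (1 - j) (finite_config M \<omega> \<tau>) j) (n - i)"
    using j unfolding capped_coupling_def by auto
  then have "height_fin n \<omega> \<tau> j (- j) = min (height_inf \<omega> \<tau> j (- j)) (n - i)"
    using height_fin_eq_count_below[OF j(1)] height_inf_eq_count_below[OF finite silent \<open>silent \<omega> \<tau> M\<close> j(1)]
    by simp
  moreover have "- j = - int i - 1"
    unfolding j_def by simp
  ultimately show ?thesis
    unfolding j_def by simp
qed

section \<open>Almost sure regularity of the clocks\<close>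

lemma ring_time_mono:
  assumes "\<forall>c. 0 < \<omega> c" and "k \<le> k'"
  shows "ring_time \<omega> b k \<le> ring_time \<omega> b k'"
  unfolding ring_time_def using assms by (intro sum_mono2) (auto intro: less_imp_le)

lemma first_le_ring_time:
  assumes "\<forall>c. 0 < \<omega> c"
  shows "\<omega> (b, 0) \<le> ring_time \<omega> b k"
  unfolding ring_time_def using assms by (intro member_le_sum) (auto intro: less_imp_le)

lemma ring_time_unbounded:
  assumes pos: "\<forall>c. 0 < \<omega> c" and often: "\<forall>N. \<exists>k\<ge>N. 1 < \<omega> (b, k)"
  shows "\<exists>k. T < ring_time \<omega> b k"
proof -
  have "\<exists>k. real N \<le> ring_time \<omega> b k" for N
  proof (induction N)
    case 0
    then show ?case
      using first_le_ring_time[OF pos, of b 0] pos by (metis of_nat_0 order.trans less_imp_le)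
  next
    case (Suc N)
    then obtain k where k: "real N \<le> ring_time \<omega> b k" by blast
    obtain k' where k': "Suc k \<le> k'" "1 < \<omega> (b, k')" using often by blast
    have "ring_time \<omega> b k + \<omega> (b, k') = (\<Sum>j\<in>insert k' {..k}. \<omega> (b, j))"
      unfolding ring_time_def using k' by simp
    also have "\<dots> \<le> ring_time \<omega> b k'"
      unfolding ring_time_def using pos k' by (intro sum_mono2) (auto intro: less_imp_le)
    finally show ?case using k k' by (intro exI[of _ k']) simp
  qed
  then obtain k where "real (nat \<lceil>T\<rceil> + 1) \<le> ring_time \<omega> b k" by blast
  then show ?thesis by (intro exI[of _ k]) linarith
qed

lemma finite_ring_times:
  assumes pos: "\<forall>c. 0 < \<omega> c" and unbounded: "\<forall>b. \<exists>k. \<tau> < ring_time \<omega> b k"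
  shows "finite (ring_times \<omega> m \<tau>)"
proof -
  obtain K where K: "\<tau> < ring_time \<omega> b (K b)" for b
    using unbounded by metis
  have "ring_times \<omega> m \<tau> \<subseteq> (\<Union>b<m. ring_time \<omega> b ` {..<K b})"
  proof
    fix t
    assume "t \<in> ring_times \<omega> m \<tau>"
    then obtain b k where bk: "t = ring_time \<omega> b k" "b < m" "ring_time \<omega> b k \<le> \<tau>"
      unfolding ring_times_def by auto
    have "k < K b"
      using ring_time_mono[OF pos, of "K b" k b] K[of b] bk(3) by (meson leI not_le order.trans)
    then show "t \<in> (\<Union>b<m. ring_time \<omega> b ` {..<K b})" using bk by auto
  qed
  then show ?thesis by (rule finite_subset) auto
qed

lemma prob_space_clock_space: "0 < \<mu> \<Longrightarrow> prob_space (clock_space \<mu>)"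
  unfolding clock_space_def
  by (intro prob_space_PiM prob_space_exponential_density) (simp add: bond_rate_def)

lemma space_clock_space [simp]: "space (clock_space \<mu>) = UNIV"
  unfolding clock_space_def by (simp add: space_PiM)

lemma sets_clock_space_all_le:
  assumes "finite J"
  shows "{\<omega>. \<forall>i\<in>J. \<omega> i \<le> T} \<in> sets (clock_space \<mu>)"
proof -
  have "{\<omega>. \<forall>i\<in>J. \<omega> i \<le> T} = (\<Inter>i\<in>J. {\<omega>\<in>space (clock_space \<mu>). \<omega> i \<le> T}) \<inter> space (clock_space \<mu>)"
    by auto
  also have "\<dots> \<in> sets (clock_space \<mu>)"
    using assms unfolding clock_space_def by measurable
  finally show ?thesis .
qed

lemma measure_clock_space_all_le:
  assumes "0 < \<mu>" and "finite J"
  shows "measure (clock_space \<mu>) {\<omega>. \<forall>i\<in>J. \<omega> i \<le> T} = (\<Prod>i\<in>J. erlang_CDF 0 (bond_rate \<mu> (fst i)) T)"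
proof -
  let ?M = "\<lambda>i. density lborel (exponential_density (bond_rate \<mu> (fst i)))"
  have rate: "0 < bond_rate \<mu> b" for b
    using assms(1) by (simp add: bond_rate_def)
  have "{\<omega>. \<forall>i\<in>J. \<omega> i \<le> T} = prod_emb UNIV ?M J (Pi\<^sub>E J (\<lambda>_. {..T}))"
    unfolding prod_emb_def by (auto simp: space_PiM PiE_iff)
  then have "emeasure (clock_space \<mu>) {\<omega>. \<forall>i\<in>J. \<omega> i \<le> T} = (\<Prod>i\<in>J. emeasure (?M i) {..T})"
    unfolding clock_space_def
    by (simp only:) (rule emeasure_PiM_emb, auto intro: prob_space_exponential_density rate assms(2))
  also have "\<dots> = ennreal (\<Prod>i\<in>J. erlang_CDF 0 (bond_rate \<mu> (fst i)) T)"
    by (simp add: emeasure_erlang_density rate prod_ennreal)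
  finally show ?thesis
    by (simp add: measure_def prod_nonneg rate)
qed

lemma AE_clock_space_pos:
  assumes "0 < \<mu>"
  shows "AE \<omega> in clock_space \<mu>. \<forall>c. 0 < \<omega> c"
proof -
  interpret P: prob_space "clock_space \<mu>" by (rule prob_space_clock_space[OF assms])
  have "AE \<omega> in clock_space \<mu>. 0 < \<omega> c" for c
  proof (rule AE_I')
    show "{\<omega>. \<forall>i\<in>{c}. \<omega> i \<le> 0} \<in> null_sets (clock_space \<mu>)"
      using measure_clock_space_all_le[OF assms, of "{c}" 0] sets_clock_space_all_le[of "{c}" 0 \<mu>]
      by (simp add: null_sets_def erlang_CDF_0 P.emeasure_eq_measure)
  qed auto
  then show ?thesis by (subst AE_all_countable) auto
qed

lemma measure_clock_space_all_le_bound: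
  assumes "0 < \<mu>" and "finite J"
  shows "measure (clock_space \<mu>) {\<omega>. \<forall>i\<in>J. \<omega> i \<le> T}
           \<le> max (erlang_CDF 0 \<mu> T) (erlang_CDF 0 1 T) ^ card J"
proof -
  have rate: "0 < bond_rate \<mu> b" for b
    using assms(1) by (simp add: bond_rate_def)
  have "(\<Prod>i\<in>J. erlang_CDF 0 (bond_rate \<mu> (fst i)) T) \<le> (\<Prod>i\<in>J. max (erlang_CDF 0 \<mu> T) (erlang_CDF 0 1 T))"
    by (intro prod_mono) (simp add: rate, simp add: bond_rate_def)
  then show ?thesis
    using measure_clock_space_all_le[OF assms] by simp
qed

lemma AE_clock_space_frequently_gt:
  fixes c :: "nat \<Rightarrow> nat \<times> nat"
  assumes "0 < \<mu>" and "inj c"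
  shows "AE \<omega> in clock_space \<mu>. \<forall>N. \<exists>k\<ge>N. T < \<omega> (c k)"
proof -
  interpret P: prob_space "clock_space \<mu>" by (rule prob_space_clock_space[OF assms(1)])
  define q where "q = max (erlang_CDF 0 \<mu> T) (erlang_CDF 0 1 T)"
  have q: "0 \<le> q" "q < 1"
    using assms(1) unfolding q_def by (auto simp: erlang_CDF_0 max_def)
  define B where "B N = {\<omega>. \<forall>k\<ge>N. \<omega> (c k) \<le> T}" for N
  have B_null: "B N \<in> null_sets (clock_space \<mu>)" for N
  proof -
    have "B N = {\<omega>\<in>space (clock_space \<mu>). \<forall>k. \<omega> (c (k + N)) \<le> T}"
      unfolding B_def by (auto, metis le_add_diff_inverse2)
    also have "\<dots> \<in> sets (clock_space \<mu>)"
      unfolding clock_space_def by measurable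
    finally have B_sets: "B N \<in> sets (clock_space \<mu>)" .
    have "P.prob (B N) \<le> q ^ K" for K
    proof -
      have J: "finite (c ` {N..<N + K})" "card (c ` {N..<N + K}) = K"
        using assms(2) by (auto simp: card_image inj_on_subset)
      have "P.prob (B N) \<le> P.prob {\<omega>. \<forall>i\<in>c ` {N..<N + K}. \<omega> i \<le> T}"
        by (rule P.finite_measure_mono[OF _ sets_clock_space_all_le[OF J(1)]]) (auto simp: B_def)
      also have "\<dots> \<le> q ^ K"
        using measure_clock_space_all_le_bound[OF assms(1) J(1)] J(2) unfolding q_def by simp
      finally show ?thesis .
    qed
    moreover have "(\<lambda>K. q ^ K) \<longlonglongrightarrow> 0"
      using q by (intro LIMSEQ_power_zero) auto
    ultimately have "P.prob (B N) \<le> 0"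
      by (intro LIMSEQ_le_const) auto
    then show ?thesis
      using B_sets measure_nonneg[of "clock_space \<mu>" "B N"]
      by (auto simp: null_sets_def P.emeasure_eq_measure)
  qed
  show ?thesis
  proof (rule AE_I')
    show "(\<Union>N. B N) \<in> null_sets (clock_space \<mu>)"
      using B_null by (rule null_sets_UN)
  qed (auto simp: B_def not_less)
qed

text \<open>A bond whose first waiting time exceeds \<open>\<tau>\<close> is silent up to time \<open>\<tau>\<close>, and for each
  integer bound there are arbitrarily distant such bonds.\<close>

lemma AE_clock_space_regular:
  assumes "0 < \<mu>"
  shows "AE \<omega> in clock_space \<mu>. (\<forall>m \<tau>. finite (ring_times \<omega> m \<tau>)) \<and> (\<forall>\<tau> N. \<exists>m\<ge>N. silent \<omega> \<tau> m)"
proof -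
  have "AE \<omega> in clock_space \<mu>. \<forall>b N. \<exists>k\<ge>N. 1 < \<omega> (b, k)"
    using AE_clock_space_frequently_gt[OF assms, of "\<lambda>k. (b, k)" 1 for b]
    by (subst AE_all_countable) (simp add: inj_def)
  moreover have "AE \<omega> in clock_space \<mu>. \<forall>T::nat. \<forall>N. \<exists>m\<ge>N. real T < \<omega> (m, 0)"
    using AE_clock_space_frequently_gt[OF assms, of "\<lambda>m. (m, 0)" "real T" for T]
    by (subst AE_all_countable) (simp add: inj_def)
  ultimately show ?thesis
    using AE_clock_space_pos[OF assms]
  proof eventually_elim
    case (elim \<omega>)
    have pos: "\<forall>c. 0 < \<omega> c" using elim(3) .
    have "finite (ring_times \<omega> m \<tau>)" for m \<tau>
      using finite_ring_times[OF pos] ring_time_unbounded[OF pos] elim(1) by blast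
    moreover have "\<exists>m\<ge>N. silent \<omega> \<tau> m" for \<tau> N
    proof -
      obtain m where "m \<ge> N" "real (nat \<lceil>\<tau>\<rceil>) < \<omega> (m, 0)"
        using elim(2) by blast
      moreover have "\<tau> \<le> real (nat \<lceil>\<tau>\<rceil>)"
        by linarith
      ultimately show ?thesis
        using first_le_ring_time[OF pos, of m] unfolding silent_def by (meson le_less_trans less_le_trans)
    qed
    ultimately show ?case by blast
  qed
qed

theorem proposition5p4:
  fixes n :: nat and \<mu> :: real
  assumes "1 \<le> n" and "0 < \<mu>"
  shows "AE \<omega> in clock_space \<mu>. \<forall>\<tau>\<ge>0. \<forall>i<n.
           height_fin n \<omega> \<tau> (int i + 1) (- int i - 1)
             = min (height_inf \<omega> \<tau> (int i + 1) (- int i - 1)) (n - i)"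
  using AE_clock_space_regular[OF assms(2)]
  by eventually_elim (auto intro: height_fin_eq_min_height_inf)

end
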